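(* Let $n\ge 2$. To each line of play of Planted Brussels Sprouts of order $n$ associate a sequence of transpositions $(t_1,\dots,t_{n-1})$ in the symmetric group $S_n$ as follows. Suppose the $k$-th move joins free arms with short labels $i$ and $j$. Let $i'$ and $j'$ be the short labels of the free arms immediately counterclockwise from the arm $i$ and from the arm $j$, respectively, within the region in which the move is made. Set $t_k=(i'\ j')$. Then the following hold: (1) $t_{n-1}t_{n-2}\cdots t_1=(1\,2\,\cdots\,n)$, where permutations are composed from right to left, so $t_1$ is applied first; (2) distinct lines of play give distinct sequences; (3) every sequence of $n-1$ transpositions $(t_1,\dots,t_{n-1})$ with $t_{n-1}\cdots t_1=(1\,2\,\cdots\,n)$ arises from some line of play. Hence these sequences are exactly the $n^{n-2}$ factorizations of the cycle $(1\,2\,\cdots\,n)$ into $n-1$ transpositions.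
   Context: Planted Brussels Sprouts of order $n$: start with a closed disk with $n$ marked points on its boundary circle, labeled $1,\dots,n$ in clockwise order. Attached to each marked point is an arm, a short segment pointing into the interior of the disk; these arms are free. A move consists of two steps. First, choose two free arms and join their free ends by a simple curve (an arc) in the disk that does not intersect any previously drawn arc or arm; the two joined arms cease to be free. Second, mark a point (a notch) on the arc, from which two new free arms emanate, one on each side of the arc. The game ends when no move is possible. A line of play is the full sequence of moves. Two lines of play are the same iff for each $k$ the arms joined at the $k$-th move coincide. Arms are identified by long labels: the original arm $i$ has long label $i$, and when arms with long labels $\alpha,\beta$ are joined, the new arms have long labels $(\alpha,\beta)$ and $(\beta,\alpha)$. Short labels: the original arm at point $i$ has short label $i$. If an arc joins arms with short labels $i$ and $j$, the two new arms receive short labels $i$ and $j$, placed so that, going clockwise around the notch, one sees the old arm $i$, the new arm $i$, the old arm $j$, and the new arm $j$. Regions and subgames: at any stage, the drawn arcs divide the disk into regions. The free arms in a region form a subgame, and any move joins two free arms of the same region. Within a region, the free arms carry distinct short labels and have a cyclic (clockwise) order around the region. "Immediately counterclockwise" refers to the preceding free arm in this cyclic order. For example, the first move joining original arms $i$ and $j$ yields $t_1=(i-1\ \ j-1)$, with indices taken mod $n$ in $\{1,\dots,n\}$. *)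

theory Defs
  imports "HOL-Combinatorics.Transposition"
begin

text \<open>Combinatorial model of Planted Brussels Sprouts.
  Long labels: the original arm i is Pt i; joining arms with long labels
  a and b creates arms Nw a b and Nw b a.\<close>

datatype larm = Pt nat | Nw larm larm

text \<open>A free arm is a pair (long label, short label).  A region is the list of its
  free arms in clockwise cyclic order (any rotation represents the same region).
  A state is the list of regions (their order is irrelevant).\<close>

type_synonym arm = "larm \<times> nat"
type_synonym region = "arm list"
type_synonym state = "region list"

text \<open>The region r, rotated so that the arm a = (al,i) comes first, reads
  a, S1, b, S2 clockwise, where b = (bl,j).  The arc from a to b splits it into the
  region S1 followed by the new arm with short label i (long label Nw al bl), and
  the region S2 followed by the new arm with short label j (long label Nw bl al).
  The arm immediately counterclockwise from a is the last element of b#S2, the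
  one immediately counterclockwise from b is the last element of a#S1; the
  associated transposition swaps their short labels.  The move is recorded as
  the unordered pair of long labels of the joined arms.\<close>

inductive bs_step :: "state \<Rightarrow> larm set \<Rightarrow> (nat \<Rightarrow> nat) \<Rightarrow> state \<Rightarrow> bool" where
  "bs_step (P @ r # Q) {al, bl}
     (transpose (snd (last ((bl, j) # S2))) (snd (last ((al, i) # S1))))
     (P @ (S1 @ [(Nw al bl, i)]) # (S2 @ [(Nw bl al, j)]) # Q)"
  if "rotate k r = (al, i) # S1 @ (bl, j) # S2"

inductive bs_plays :: "state \<Rightarrow> larm set list \<Rightarrow> (nat \<Rightarrow> nat) list \<Rightarrow> state \<Rightarrow> bool" where
  "bs_plays R [] [] R"
| "bs_step R m t R' \<Longrightarrow> bs_plays R' ms ts R'' \<Longrightarrow> bs_plays R (m # ms) (t # ts) R''"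

definition bs_init :: "nat \<Rightarrow> state" where
  "bs_init n = [map (\<lambda>i. (Pt i, i)) [1..<n+1]]"

definition bs_terminal :: "state \<Rightarrow> bool" where
  "bs_terminal R \<longleftrightarrow> (\<forall>r \<in> set R. length r \<le> 1)"

definition line_of_play :: "nat \<Rightarrow> larm set list \<Rightarrow> (nat \<Rightarrow> nat) list \<Rightarrow> bool" where
  "line_of_play n ms ts \<longleftrightarrow> (\<exists>R. bs_plays (bs_init n) ms ts R \<and> bs_terminal R)"

text \<open>Product t_m ... t_1 of ts = [t_1,...,t_m], t_1 applied first.\<close>
definition perm_prod :: "(nat \<Rightarrow> nat) list \<Rightarrow> nat \<Rightarrow> nat" where
  "perm_prod ts = fold (\<lambda>t acc. t \<circ> acc) ts id"

definition ncycle :: "nat \<Rightarrow> nat \<Rightarrow> nat" where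
  "ncycle n i = (if 1 \<le> i \<and> i < n then i + 1 else if i = n then 1 else i)"

definition is_transp_Sn :: "nat \<Rightarrow> (nat \<Rightarrow> nat) \<Rightarrow> bool" where
  "is_transp_Sn n t \<longleftrightarrow> (\<exists>a b. a \<in> {1..n} \<and> b \<in> {1..n} \<and> a \<noteq> b \<and> t = transpose a b)"

end

theory Submission
  imports Defs "HOL-Combinatorics.Cycles"
begin

(* The short labels of the free arms, read clockwise around each region, are the cycles of a
   permutation sigma of {1..n}: initially sigma = (1 2 ... n), and at the end of the game every
   region has exactly one free arm, so sigma = id.  A move joining the arms labelled i and j
   splits the cycle of its region in two, and its transposition t = (i' j') satisfies
   sigma i' = i, sigma j' = j and sigma_new = sigma o t.  As every move adds one region, a line of
   play has n - 1 moves and t_(n-1) ... t_1 = (1 2 ... n).  Since sigma and t determine i and j,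
   hence the joined arms, the line of play is recovered from its sequence.  Conversely, composing
   a product of disjoint cycles with a transposition splits or merges cycles, so a product of k
   transpositions with c cycles moving m points has m <= c + k.  In a factorization of the n-cycle
   into n - 1 transpositions this forces each t_k to swap two points of the same cycle, i.e. of
   the same region, which is a legal move. *)

lemma comp_transpose_eq: "inj f \<Longrightarrow> f \<circ> transpose a b = transpose (f a) (f b) \<circ> f"
  by (auto simp: fun_eq_iff transpose_def inj_eq)

lemma comp_transpose_eq_iff: "f \<circ> transpose a b = g \<longleftrightarrow> f = g \<circ> transpose a b"
  by (metis comp_assoc comp_id transpose_comp_involutory)

lemma transpose_eq_transpose_iff:
  assumes "p \<noteq> q"
  shows "transpose p q = transpose p' q' \<longleftrightarrow> (p' = p \<and> q' = q) \<or> (p' = q \<and> q' = p)"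
proof
  assume "transpose p q = transpose p' q'"
  then have "transpose p' q' p = q" "transpose p' q' q = p"
    by (metis transpose_apply_first transpose_apply_second)+
  then show "(p' = p \<and> q' = q) \<or> (p' = q \<and> q' = p)" using assms by (auto simp: transpose_eq_iff)
qed (auto simp: transpose_commute)

lemma ex_rotate_last: "x \<in> set xs \<Longrightarrow> \<exists>k. last (rotate k xs) = x"
proof -
  assume "x \<in> set xs"
  then obtain us vs where "xs = us @ x # vs" by (meson split_list)
  then have "rotate (length (us @ [x])) xs = (vs @ us) @ [x]"
    using rotate_append[of "us @ [x]" vs] by simp
  then show ?thesis by (metis last_snoc)
qed

lemma ex_rotate_eq_append_two:
  assumes "x \<in> set xs" "y \<in> set xs" "x \<noteq> y"
  shows "\<exists>k ys zs. rotate k xs = ys @ y # zs @ [x]"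
proof -
  obtain k where k: "last (rotate k xs) = x" using ex_rotate_last[OF assms(1)] by blast
  have "rotate k xs \<noteq> []" using assms(1) by auto
  then have k': "rotate k xs = butlast (rotate k xs) @ [x]" using k by (metis append_butlast_last_id)
  then have "y \<in> set (butlast (rotate k xs) @ [x])" using assms(2) by (metis set_rotate)
  then have "y \<in> set (butlast (rotate k xs))" using assms(3) by auto
  then obtain us vs where "butlast (rotate k xs) = us @ y # vs" by (meson split_list)
  then show ?thesis using k' by (metis append.assoc append_Cons)
qed

lemma cycle_of_list_append:
  "xs \<noteq> [] \<Longrightarrow> ys \<noteq> [] \<Longrightarrow>
   cycle_of_list (xs @ ys) = cycle_of_list xs \<circ> transpose (last xs) (hd ys) \<circ> cycle_of_list ys"
proof (induction xs rule: cycle_of_list.induct)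
  case ("2_2" x)
  then show ?case by (cases ys) auto
qed (simp_all add: comp_assoc)

lemma cycle_of_list_last: "distinct cs \<Longrightarrow> cs \<noteq> [] \<Longrightarrow> cycle_of_list cs (last cs) = hd cs"
  using cyclic_rotation[of cs 1] last_map[of cs "cycle_of_list cs"]
  by (cases cs) simp_all

lemma cycle_of_list_append_last:
  assumes "distinct (xs @ ys)" "xs \<noteq> []" "ys \<noteq> []"
  shows "cycle_of_list (xs @ ys) (last xs) = hd ys"
proof -
  have "last xs \<notin> set ys" "hd ys \<notin> set xs"
    using assms(1) last_in_set[OF assms(2)] hd_in_set[OF assms(3)] by auto
  then show ?thesis using cycle_of_list_append[OF assms(2,3)] by (simp add: id_outside_supp)
qed

lemma cycle_of_list_rotate1: "distinct cs \<Longrightarrow> cycle_of_list (rotate1 cs) = cycle_of_list cs"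
  using cycle_of_list_rotate_independent[of cs 1] by simp

lemma inj_cycle_of_list: "inj (cycle_of_list cs)"
  using permutes_inj[OF cycle_permutes] .

lemma cycle_of_list_split:
  assumes "distinct (xs @ ys)" "xs \<noteq> []" "ys \<noteq> []"
  shows "cycle_of_list (xs @ ys) \<circ> transpose (last ys) (last xs) = cycle_of_list xs \<circ> cycle_of_list ys"
proof -
  have "last xs \<notin> set ys" using assms(1) last_in_set[OF assms(2)] by auto
  then have "cycle_of_list ys \<circ> transpose (last ys) (last xs)
      = transpose (last xs) (hd ys) \<circ> cycle_of_list ys"
    using assms comp_transpose_eq[OF inj_cycle_of_list, of ys "last ys" "last xs"]
    by (simp add: cycle_of_list_last id_outside_supp transpose_commute)
  then have "cycle_of_list (xs @ ys) \<circ> transpose (last ys) (last xs)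
      = cycle_of_list xs \<circ>
        (transpose (last xs) (hd ys) \<circ> (transpose (last xs) (hd ys) \<circ> cycle_of_list ys))"
    using cycle_of_list_append[OF assms(2,3)] by (simp add: comp_assoc)
  then show ?thesis by (simp flip: comp_assoc)
qed

section \<open>Products of disjoint cycles\<close>

primrec cycles_perm :: "'a list list \<Rightarrow> 'a \<Rightarrow> 'a" where
  "cycles_perm [] = id"
| "cycles_perm (c # C) = cycle_of_list c \<circ> cycles_perm C"

definition disjoint_cycles :: "'a list list \<Rightarrow> bool" where
  "disjoint_cycles C \<longleftrightarrow> distinct (concat C) \<and> [] \<notin> set C"

lemma cycles_perm_append [simp]: "cycles_perm (C @ D) = cycles_perm C \<circ> cycles_perm D"
  by (induction C) (simp_all add: comp_assoc)

lemma cycles_perm_permutes: "cycles_perm C permutes set (concat C)"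
proof (induction C)
  case (Cons c C)
  have "cycles_perm C permutes set (concat (c # C))" "cycle_of_list c permutes set (concat (c # C))"
    using permutes_subset[OF Cons.IH] permutes_subset[OF cycle_permutes, of c] by auto
  then show ?case unfolding cycles_perm.simps by (rule permutes_compose)
qed (simp only: cycles_perm.simps permutes_id)

lemma cycles_perm_member:
  "distinct (concat C) \<Longrightarrow> c \<in> set C \<Longrightarrow> x \<in> set c \<Longrightarrow> cycles_perm C x = cycle_of_list c x"
proof (induction C)
  case (Cons d C)
  show ?case
  proof (cases "c = d")
    case True
    then have "x \<notin> set (concat C)" using Cons.prems by auto
    then have "cycles_perm C x = x" by (rule permutes_not_in[OF cycles_perm_permutes])
    then show ?thesis using True by simp
  next
    case False
    then have "c \<in> set C" using Cons.prems(2) by simp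
    moreover have "cycle_of_list c x \<in> set c"
      using permutes_in_image[OF cycle_permutes, of c x] Cons.prems(3) by blast
    ultimately have "cycle_of_list c x \<in> set (concat C)" by auto
    then have "cycle_of_list c x \<notin> set d" using Cons.prems(1) by auto
    then show ?thesis using Cons \<open>c \<in> set C\<close> by (simp add: id_outside_supp)
  qed
qed simp

lemma cycles_perm_comp_transpose_commute:
  assumes "a \<notin> set (concat C)" "b \<notin> set (concat C)"
  shows "cycles_perm C \<circ> transpose a b = transpose a b \<circ> cycles_perm C"
proof -
  have "cycles_perm C a = a" "cycles_perm C b = b"
    using assms by (simp_all del: set_concat add: permutes_not_in[OF cycles_perm_permutes])
  then show ?thesis using comp_transpose_eq[OF permutes_inj[OF cycles_perm_permutes], of C a b] by simp
qed

lemma cycle_of_list_comp_cycles_perm_commute: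
  assumes "distinct (concat (c # C))"
  shows "cycle_of_list c \<circ> cycles_perm C = cycles_perm C \<circ> cycle_of_list c"
  using assms
proof (induction C)
  case (Cons d C)
  then have "cycle_of_list c \<circ> cycle_of_list d = cycle_of_list d \<circ> cycle_of_list c"
    by (intro cycles_commute) auto
  moreover have "cycle_of_list c \<circ> cycles_perm C = cycles_perm C \<circ> cycle_of_list c"
    using Cons.prems by (intro Cons.IH) auto
  ultimately show ?case by (metis comp_assoc cycles_perm.simps(2))
qed simp

lemma cycles_perm_eq_id_imp_singletons:
  assumes "disjoint_cycles C" "cycles_perm C = id" "c \<in> set C"
  shows "length c = 1"
proof (rule ccontr)
  assume "length c \<noteq> 1"
  moreover have "c \<noteq> []" using assms(1,3) unfolding disjoint_cycles_def by auto
  ultimately obtain a b cs where c: "c = a # b # cs" by (cases c rule: remdups_adj.cases) auto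
  have "distinct c" using assms(1,3) unfolding disjoint_cycles_def by (auto simp: distinct_concat_iff)
  then have "a \<notin> set (b # cs)" "a \<noteq> b" using c by auto
  then have "cycle_of_list c a = b" using c by (simp add: id_outside_supp)
  moreover have "cycles_perm C a = cycle_of_list c a"
    using assms(1,3) c by (intro cycles_perm_member) (auto simp: disjoint_cycles_def)
  ultimately show False using assms(2) \<open>a \<noteq> b\<close> by (metis id_apply)
qed

lemma cycles_perm_singletons: "(\<And>c. c \<in> set C \<Longrightarrow> length c = 1) \<Longrightarrow> cycles_perm C = id"
proof (induction C)
  case (Cons c C)
  then obtain x where "c = [x]" by (metis length_0_conv length_Suc_conv list.set_intros(1) One_nat_def)
  then show ?case using Cons by simp
qed simp

lemma length_le_length_concat: "[] \<notin> set C \<Longrightarrow> length C \<le> length (concat C)"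
proof (induction C)
  case (Cons c C)
  then have "1 \<le> length c" by (cases c) auto
  with Cons show ?case by simp
qed simp

lemma length_concat_eq_length_iff:
  "[] \<notin> set C \<Longrightarrow> length (concat C) = length C \<longleftrightarrow> (\<forall>c \<in> set C. length c = 1)"
proof (induction C)
  case (Cons c C)
  have "length C \<le> length (concat C)" "1 \<le> length c"
    using Cons.prems length_le_length_concat[of C] by (auto simp: Suc_le_eq)
  then show ?case using Cons by auto
qed simp

lemma card_concat_eq_length_iff:
  "disjoint_cycles C \<Longrightarrow> card (set (concat C)) = length C \<longleftrightarrow> (\<forall>c \<in> set C. length c = 1)"
  unfolding disjoint_cycles_def by (metis distinct_card length_concat_eq_length_iff)

lemma cycles_perm_split:
  assumes "disjoint_cycles (P @ c # Q)" "rotate k c = xs @ ys" "xs \<noteq> []" "ys \<noteq> []"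
  shows "disjoint_cycles (P @ xs # ys # Q)"
    and "cycles_perm (P @ xs # ys # Q) = cycles_perm (P @ c # Q) \<circ> transpose (last ys) (last xs)"
proof -
  have c: "distinct (xs @ ys)" "set (xs @ ys) = set c"
    using assms(1) distinct_rotate[of k c] set_rotate[of k c] unfolding assms(2) disjoint_cycles_def
    by auto
  then show "disjoint_cycles (P @ xs # ys # Q)"
    using assms(1,3,4) unfolding disjoint_cycles_def by auto
  have "last xs \<in> set c" "last ys \<in> set c" unfolding c(2)[symmetric] using assms(3,4) by simp_all
  then have "last ys \<notin> set (concat Q)" "last xs \<notin> set (concat Q)"
    using assms(1) unfolding disjoint_cycles_def by auto
  then have "cycles_perm Q \<circ> transpose (last ys) (last xs)
      = transpose (last ys) (last xs) \<circ> cycles_perm Q"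
    by (rule cycles_perm_comp_transpose_commute)
  moreover have "distinct c" using assms(1) unfolding disjoint_cycles_def by simp
  then have "cycle_of_list c = cycle_of_list (xs @ ys)"
    using assms(2) cycle_of_list_rotate_independent[of c k] by simp
  ultimately have "cycles_perm (P @ c # Q) \<circ> transpose (last ys) (last xs)
      = cycles_perm P \<circ> (cycle_of_list (xs @ ys) \<circ> transpose (last ys) (last xs)) \<circ> cycles_perm Q"
    by (simp add: comp_assoc)
  also have "\<dots> = cycles_perm (P @ xs # ys # Q)"
    by (simp add: cycle_of_list_split[OF c(1) assms(3,4)] comp_assoc)
  finally show "cycles_perm (P @ xs # ys # Q) = cycles_perm (P @ c # Q) \<circ> transpose (last ys) (last xs)"
    by simp
qed

lemma cycles_perm_at_split_points:
  assumes "disjoint_cycles C" "c \<in> set C" "rotate k c = xs @ ys" "xs \<noteq> []" "ys \<noteq> []"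
  shows "cycles_perm C (last xs) = hd ys" and "cycles_perm C (last ys) = hd xs"
proof -
  have "distinct c" using assms(1,2) unfolding disjoint_cycles_def by (auto simp: distinct_concat_iff)
  then have d: "distinct (xs @ ys)" and s: "set (xs @ ys) = set c"
    and cyc: "cycle_of_list c = cycle_of_list (xs @ ys)"
    using assms(3) cycle_of_list_rotate_independent[of c k] by (metis distinct_rotate set_rotate)+
  have "last xs \<in> set c" "last ys \<in> set c" unfolding s[symmetric] using assms(4,5) by simp_all
  moreover have "distinct (concat C)" using assms(1) unfolding disjoint_cycles_def by simp
  ultimately have "cycles_perm C (last xs) = cycle_of_list (xs @ ys) (last xs)"
    and "cycles_perm C (last ys) = cycle_of_list (xs @ ys) (last (xs @ ys))"
    using cycles_perm_member[OF _ assms(2)] cyc assms(5) by simp_all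
  then show "cycles_perm C (last xs) = hd ys" and "cycles_perm C (last ys) = hd xs"
    using cycle_of_list_append_last[OF d assms(4,5)] cycle_of_list_last[OF d] assms(4) by simp_all
qed

lemma cycles_perm_merge:
  assumes C: "disjoint_cycles C" "C = P @ c1 # M @ c2 # Q" and "x \<in> set c1" "y \<in> set c2"
  obtains C' where "disjoint_cycles C'" "set (concat C') = set (concat C)"
    "Suc (length C') = length C" "cycles_perm C' = cycles_perm C \<circ> transpose x y"
proof -
  obtain k1 k2 where x: "last (rotate k1 c1) = x" and y: "last (rotate k2 c2) = y"
    using ex_rotate_last assms(3,4) by metis
  define d1 where "d1 = rotate k1 c1"
  define d2 where "d2 = rotate k2 c2"
  have "distinct c1" "distinct c2" "c1 \<noteq> []" "c2 \<noteq> []"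
    using C unfolding disjoint_cycles_def by auto
  then have d: "distinct d1" "distinct d2" "set d1 = set c1" "set d2 = set c2" "d1 \<noteq> []" "d2 \<noteq> []"
    and cyc: "cycle_of_list d1 = cycle_of_list c1" "cycle_of_list d2 = cycle_of_list c2"
    unfolding d1_def d2_def by (simp_all flip: cycle_of_list_rotate_independent)
  define C' where "C' = P @ (d1 @ d2) # M @ Q"
  have "disjoint_cycles C'"
    using C d unfolding C'_def disjoint_cycles_def by auto
  then have "cycles_perm (P @ d1 # d2 # M @ Q) = cycles_perm C' \<circ> transpose (last d2) (last d1)"
    unfolding C'_def by (rule cycles_perm_split(2)[where k = 0]) (simp_all add: d)
  also have "cycles_perm (P @ d1 # d2 # M @ Q) = cycles_perm C"
  proof -
    have "cycle_of_list c2 \<circ> cycles_perm M = cycles_perm M \<circ> cycle_of_list c2"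
      using C by (intro cycle_of_list_comp_cycles_perm_commute) (auto simp: disjoint_cycles_def)
    then have "cycle_of_list c2 \<circ> (cycles_perm M \<circ> cycles_perm Q)
        = cycles_perm M \<circ> (cycle_of_list c2 \<circ> cycles_perm Q)"
      by (metis comp_assoc)
    then show ?thesis using C(2) by (simp add: comp_assoc cyc)
  qed
  finally have "cycles_perm C' = cycles_perm C \<circ> transpose x y"
    using x y unfolding d1_def d2_def by (metis comp_transpose_eq_iff transpose_commute)
  moreover have "set (concat C') = set (concat C)" "Suc (length C') = length C"
    using C d unfolding C'_def by auto
  ultimately show thesis using that \<open>disjoint_cycles C'\<close> by blast
qed

lemma cycles_perm_comp_transpose_same_cycle:
  assumes "disjoint_cycles C" "c \<in> set C" "x \<in> set c" "y \<in> set c" "x \<noteq> y"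
  obtains C' where "disjoint_cycles C'" "set (concat C') = set (concat C)"
    "length C' = Suc (length C)" "cycles_perm C' = cycles_perm C \<circ> transpose x y"
proof -
  obtain P Q where C: "C = P @ c # Q" using assms(2) by (meson split_list)
  obtain k xs ys where "rotate k c = xs @ y # ys @ [x]" using ex_rotate_eq_append_two assms(3-5) by metis
  then have k: "rotate k c = (xs @ [y]) @ (ys @ [x])" by simp
  let ?C' = "P @ (xs @ [y]) # (ys @ [x]) # Q"
  have "disjoint_cycles ?C'" "cycles_perm ?C' = cycles_perm C \<circ> transpose x y"
    using cycles_perm_split[OF assms(1)[unfolded C] k] C by simp_all
  moreover have "set (concat ?C') = set (concat C)"
    using C set_rotate[of k c] unfolding k by auto
  moreover have "length ?C' = Suc (length C)" using C by simp
  ultimately show thesis using that by blast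
qed

lemma cycles_perm_comp_transpose_distinct_cycles:
  assumes "disjoint_cycles C" "x \<in> set (concat C)" "y \<in> set (concat C)"
    and "\<not> (\<exists>c \<in> set C. x \<in> set c \<and> y \<in> set c)"
  obtains C' where "disjoint_cycles C'" "set (concat C') = set (concat C)"
    "Suc (length C') = length C" "cycles_perm C' = cycles_perm C \<circ> transpose x y"
proof -
  obtain c1 c2 where c: "c1 \<in> set C" "x \<in> set c1" "c2 \<in> set C" "y \<in> set c2"
    using assms(2,3) by auto
  then have "c1 \<noteq> c2" using assms(4) by auto
  obtain P Z where C: "C = P @ c1 # Z" using c(1) by (meson split_list)
  then consider M Q where "Z = M @ c2 # Q" | P1 M where "P = P1 @ c2 # M"
    using c(3) \<open>c1 \<noteq> c2\<close> by (metis Un_iff set_ConsD set_append split_list)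
  then show thesis
  proof cases
    case 1
    then have C': "C = P @ c1 # M @ c2 # Q" using C by simp
    show thesis using cycles_perm_merge[OF assms(1) C' c(2,4)] that by blast
  next
    case 2
    then have C': "C = P1 @ c2 # M @ c1 # Z" using C by simp
    show thesis using cycles_perm_merge[OF assms(1) C' c(4,2)] that by (metis transpose_commute)
  qed
qed

lemma cycles_perm_comp_transpose:
  assumes "disjoint_cycles C" "x \<in> set (concat C)" "y \<in> set (concat C)"
  obtains C' where "disjoint_cycles C'" "set (concat C') = set (concat C)"
    "length C' \<le> Suc (length C)" "cycles_perm C' = cycles_perm C \<circ> transpose x y"
proof -
  consider "x = y" | c where "c \<in> set C" "x \<in> set c" "y \<in> set c" "x \<noteq> y"
    | "\<not> (\<exists>c \<in> set C. x \<in> set c \<and> y \<in> set c)"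
    by blast
  then show thesis
  proof cases
    case 1
    then show thesis using that[of C] assms(1) by simp
  next
    case 2
    then show thesis
      using cycles_perm_comp_transpose_same_cycle[OF assms(1)] that by (metis le_refl)
  next
    case 3
    then show thesis
      using cycles_perm_comp_transpose_distinct_cycles[OF assms] that
      by (metis le_SucI lessI less_imp_le_nat)
  qed
qed

section \<open>Factorizations into transpositions\<close>

lemma perm_prod_Nil: "perm_prod [] = id"
  by (simp add: perm_prod_def)

lemma perm_prod_Cons: "perm_prod (t # ts) = perm_prod ts \<circ> t"
proof -
  have "(\<lambda>f. f \<circ> t) (fold (\<lambda>u f. u \<circ> f) ts id) = fold (\<lambda>u f. u \<circ> f) ts ((\<lambda>f. f \<circ> t) id)"
    by (rule fold_commute_apply[where h = "\<lambda>f. f \<circ> t"]) (simp add: fun_eq_iff)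
  then show ?thesis by (simp add: perm_prod_def)
qed

lemma card_concat_le_length_add_length_factorization:
  assumes "disjoint_cycles C" "cycles_perm C = perm_prod ts"
    and "\<forall>t \<in> set ts. \<exists>p \<in> set (concat C). \<exists>q \<in> set (concat C). t = transpose p q"
  shows "card (set (concat C)) \<le> length C + length ts"
  using assms
proof (induction ts arbitrary: C)
  case Nil
  then have "cycles_perm C = id" by (simp only: perm_prod_Nil)
  then have "\<forall>c \<in> set C. length c = 1"
    using cycles_perm_eq_id_imp_singletons[OF Nil.prems(1)] by blast
  then show ?case using card_concat_eq_length_iff[OF Nil.prems(1)] by simp
next
  case (Cons t ts)
  then obtain p q where pq: "p \<in> set (concat C)" "q \<in> set (concat C)" "t = transpose p q"
    by auto
  obtain C' where C': "disjoint_cycles C'" "set (concat C') = set (concat C)"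
    "length C' \<le> Suc (length C)" "cycles_perm C' = cycles_perm C \<circ> transpose p q"
    by (rule cycles_perm_comp_transpose[OF Cons.prems(1) pq(1,2)])
  have "cycles_perm C' = perm_prod ts"
    using C'(4) Cons.prems(2) pq(3) by (metis perm_prod_Cons comp_transpose_eq_iff)
  moreover have "\<forall>t \<in> set ts. \<exists>p \<in> set (concat C'). \<exists>q \<in> set (concat C'). t = transpose p q"
    using Cons.prems(3) unfolding C'(2) by simp
  ultimately have "card (set (concat C')) \<le> length C' + length ts"
    using Cons.IH[OF C'(1)] by blast
  then show ?case using C'(2,3) by simp
qed

lemma minimal_factorization_first_transpose_within_cycle:
  assumes "disjoint_cycles C" "cycles_perm C = perm_prod (transpose a b # ts)"
    and "card (set (concat C)) = Suc (length C + length ts)"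
    and "a \<in> set (concat C)" "b \<in> set (concat C)"
    and "\<forall>t \<in> set ts. \<exists>p \<in> set (concat C). \<exists>q \<in> set (concat C). t = transpose p q"
  shows "\<exists>c \<in> set C. a \<in> set c \<and> b \<in> set c"
proof (rule ccontr)
  assume "\<not> ?thesis"
  then obtain C' where C': "disjoint_cycles C'" "set (concat C') = set (concat C)"
    "Suc (length C') = length C" "cycles_perm C' = cycles_perm C \<circ> transpose a b"
    by (rule cycles_perm_comp_transpose_distinct_cycles[OF assms(1,4,5)])
  moreover have "cycles_perm C' = perm_prod ts"
    using C'(4) assms(2) by (metis perm_prod_Cons comp_transpose_eq_iff)
  moreover have "\<forall>t \<in> set ts. \<exists>p \<in> set (concat C'). \<exists>q \<in> set (concat C'). t = transpose p q"
    using assms(6) unfolding C'(2) .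
  ultimately have "card (set (concat C')) \<le> length C' + length ts"
    by (intro card_concat_le_length_add_length_factorization)
  then show False using C'(2,3) assms(3) by simp
qed

section \<open>The permutation of a game state\<close>

definition label_cycles :: "state \<Rightarrow> nat list list" where
  "label_cycles R = map (map snd) R"

definition state_perm :: "state \<Rightarrow> nat \<Rightarrow> nat" where
  "state_perm R = cycles_perm (label_cycles R)"

lemma length_label_cycles [simp]: "length (label_cycles R) = length R"
  by (simp add: label_cycles_def)

lemma concat_label_cycles: "concat (label_cycles R) = map snd (concat R)"
  by (simp add: label_cycles_def map_concat)

lemma bs_step_transpose: "bs_step R m t R' \<Longrightarrow> \<exists>p q. t = transpose p q"
  by (erule bs_step.cases) blast

lemma bs_step_label_cycles:
  assumes "bs_step R m t R'"
  obtains P c Q k xs ys where "label_cycles R = P @ c # Q" "rotate k c = xs @ ys" "xs \<noteq> []" "ys \<noteq> []"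
    "label_cycles R' = P @ rotate1 xs # rotate1 ys # Q" "t = transpose (last ys) (last xs)"
proof -
  from assms obtain P r Q k al i S1 bl j S2 where
    R: "R = P @ r # Q" and r: "rotate k r = (al, i) # S1 @ (bl, j) # S2"
    and t: "t = transpose (snd (last ((bl, j) # S2))) (snd (last ((al, i) # S1)))"
    and R': "R' = P @ (S1 @ [(Nw al bl, i)]) # (S2 @ [(Nw bl al, j)]) # Q"
    by (cases rule: bs_step.cases) blast
  let ?xs = "map snd ((al, i) # S1)" and ?ys = "map snd ((bl, j) # S2)"
  have "label_cycles R = map (map snd) P @ map snd r # map (map snd) Q"
    "rotate k (map snd r) = ?xs @ ?ys"
    "label_cycles R' = map (map snd) P @ rotate1 ?xs # rotate1 ?ys # map (map snd) Q"
    "t = transpose (last ?ys) (last ?xs)"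
    using R r R' t last_map[of "(al, i) # S1" snd] last_map[of "(bl, j) # S2" snd]
    by (simp_all add: label_cycles_def rotate_map)
  then show thesis using that by blast
qed

lemma bs_step_invariants:
  assumes "bs_step R m t R'" "disjoint_cycles (label_cycles R)"
  shows "disjoint_cycles (label_cycles R')"
    and "set (concat (label_cycles R')) = set (concat (label_cycles R))"
    and "length R' = Suc (length R)"
    and "state_perm R' = state_perm R \<circ> t"
proof -
  obtain P c Q k xs ys where R: "label_cycles R = P @ c # Q" and c: "rotate k c = xs @ ys"
    and ne: "xs \<noteq> []" "ys \<noteq> []" and R': "label_cycles R' = P @ rotate1 xs # rotate1 ys # Q"
    and t: "t = transpose (last ys) (last xs)"
    using bs_step_label_cycles[OF assms(1)] by blast
  note split = cycles_perm_split[OF assms(2)[unfolded R] c ne]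
  then have "distinct xs" "distinct ys" unfolding disjoint_cycles_def by simp_all
  then have "cycles_perm (label_cycles R') = cycles_perm (P @ xs # ys # Q)"
    unfolding R' by (simp add: cycle_of_list_rotate1)
  then show "state_perm R' = state_perm R \<circ> t"
    unfolding state_perm_def R t using split(2) by simp
  have "rotate1 xs \<noteq> []" "rotate1 ys \<noteq> []" using ne by simp_all
  then show "disjoint_cycles (label_cycles R')"
    using split(1) unfolding R' disjoint_cycles_def by (auto simp: eq_commute[of "[]"])
  have "set xs \<union> set ys = set c" using c by (metis set_append set_rotate)
  then show "set (concat (label_cycles R')) = set (concat (label_cycles R))"
    unfolding R R' by auto
  have "length (label_cycles R') = Suc (length (label_cycles R))"
    unfolding R R' by simp
  then show "length R' = Suc (length R)" by simp
qed

lemma bs_step_joined_arms: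
  assumes "bs_step R m t R'" "disjoint_cycles (label_cycles R)"
  obtains al i bl j p q where "t = transpose p q" "p \<noteq> q"
    "state_perm R p = i" "state_perm R q = j" "(al, i) \<in> set (concat R)" "(bl, j) \<in> set (concat R)"
    "m = {al, bl}"
    "set (concat R') = insert (Nw al bl, i) (insert (Nw bl al, j) (set (concat R) - {(al, i), (bl, j)}))"
proof -
  from assms(1) obtain P r Q k al i S1 bl j S2 where
    R: "R = P @ r # Q" and r: "rotate k r = (al, i) # S1 @ (bl, j) # S2"
    and t: "t = transpose (snd (last ((bl, j) # S2))) (snd (last ((al, i) # S1)))"
    and m: "m = {al, bl}"
    and R': "R' = P @ (S1 @ [(Nw al bl, i)]) # (S2 @ [(Nw bl al, j)]) # Q"
    by (cases rule: bs_step.cases) blast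
  define xs where "xs = map snd ((al, i) # S1)"
  define ys where "ys = map snd ((bl, j) # S2)"
  have ne: "xs \<noteq> []" "ys \<noteq> []" unfolding xs_def ys_def by simp_all
  have rot: "rotate k (map snd r) = xs @ ys" unfolding xs_def ys_def by (simp add: rotate_map r)
  have "map snd r \<in> set (label_cycles R)" unfolding R label_cycles_def by simp
  note at_split = cycles_perm_at_split_points[OF assms(2) this rot ne]
  have labels: "distinct (map snd (concat P @ rotate k r @ concat Q))"
    using assms(2) unfolding disjoint_cycles_def concat_label_cycles R
    by (simp add: rotate_map[symmetric])
  then have "i \<noteq> j" unfolding r by simp
  have perm: "state_perm R (last ys) = i" "state_perm R (last xs) = j"
    using at_split unfolding state_perm_def xs_def ys_def by simp_all
  with \<open>i \<noteq> j\<close> have neq: "last ys \<noteq> last xs" by auto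
  have t': "t = transpose (last ys) (last xs)"
    using last_map[of "(al, i) # S1" snd] last_map[of "(bl, j) # S2" snd]
    unfolding t xs_def ys_def by simp
  have "distinct (concat P @ rotate k r @ concat Q)" using labels by (metis distinct_map)
  then have "distinct (concat P @ (al, i) # S1 @ (bl, j) # S2 @ concat Q)" unfolding r by simp
  moreover have "set r = insert (al, i) (insert (bl, j) (set S1 \<union> set S2))"
    using set_rotate[of k r] unfolding r by auto
  ultimately have arms: "(al, i) \<in> set (concat R)" "(bl, j) \<in> set (concat R)"
    and arms': "set (concat R') =
      insert (Nw al bl, i) (insert (Nw bl al, j) (set (concat R) - {(al, i), (bl, j)}))"
    unfolding R R' by (simp_all del: set_concat) blast
  from t' neq perm arms m arms' show thesis by (rule that)
qed

lemma bs_step_deterministic: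
  assumes "bs_step R1 m1 t R1'" "bs_step R2 m2 t R2'"
    and "disjoint_cycles (label_cycles R1)" "disjoint_cycles (label_cycles R2)"
    and "state_perm R1 = state_perm R2" "set (concat R1) = set (concat R2)"
  shows "m1 = m2 \<and> set (concat R1') = set (concat R2')"
proof -
  obtain al i bl j p q where A: "t = transpose p q" "p \<noteq> q"
    "state_perm R1 p = i" "state_perm R1 q = j" "(al, i) \<in> set (concat R1)" "(bl, j) \<in> set (concat R1)"
    "m1 = {al, bl}"
    "set (concat R1') =
      insert (Nw al bl, i) (insert (Nw bl al, j) (set (concat R1) - {(al, i), (bl, j)}))"
    by (rule bs_step_joined_arms[OF assms(1,3)])
  obtain al' i' bl' j' p' q' where B: "t = transpose p' q'"
    "state_perm R2 p' = i'" "state_perm R2 q' = j'"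
    "(al', i') \<in> set (concat R2)" "(bl', j') \<in> set (concat R2)"
    "m2 = {al', bl'}"
    "set (concat R2') =
      insert (Nw al' bl', i') (insert (Nw bl' al', j') (set (concat R2) - {(al', i'), (bl', j')}))"
    by (rule bs_step_joined_arms[OF assms(2,4)])
  note B = B[folded assms(5,6)]
  have "inj_on snd (set (concat R1))"
    using assms(3) unfolding disjoint_cycles_def concat_label_cycles by (simp add: distinct_map)
  then have unique: "a = b" if "(a, l) \<in> set (concat R1)" "(b, l) \<in> set (concat R1)" for a b l
    using that inj_onD by fastforce
  from A(1,2) B(1) consider "p' = p" "q' = q" | "p' = q" "q' = p"
    using transpose_eq_transpose_iff by metis
  then show ?thesis
  proof cases
    case 1
    then have "i' = i" "j' = j" using A(3,4) B(2,3) by simp_all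
    then have "al' = al" "bl' = bl" using unique A(5,6) B(4,5) by simp_all
    then show ?thesis using A(7,8) B(6,7) \<open>i' = i\<close> \<open>j' = j\<close> by simp
  next
    case 2
    then have "i' = j" "j' = i" using A(3,4) B(2,3) by simp_all
    then have "al' = bl" "bl' = al" using unique A(5,6) B(4,5) by simp_all
    then show ?thesis using A(7,8) B(6,7) \<open>i' = j\<close> \<open>j' = i\<close> by (auto simp: insert_commute)
  qed
qed

lemma bs_plays_invariants:
  assumes "bs_plays R ms ts R'" "disjoint_cycles (label_cycles R)"
  shows "disjoint_cycles (label_cycles R') \<and>
    set (concat (label_cycles R')) = set (concat (label_cycles R)) \<and>
    length R' = length R + length ts \<and> state_perm R = state_perm R' \<circ> perm_prod ts"
  using assms
proof (induction rule: bs_plays.induct)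
  case (1 R)
  then show ?case by (simp add: perm_prod_Nil)
next
  case (2 R m t R1 ms ts R')
  note step = bs_step_invariants[OF 2(1) 2(4)]
  obtain p q where "t = transpose p q" using bs_step_transpose[OF 2(1)] by blast
  then have "state_perm R = state_perm R1 \<circ> t"
    using step(4) by (metis comp_transpose_eq_iff)
  then show ?case using 2(3)[OF step(1)] step(2,3) by (simp add: perm_prod_Cons comp_assoc)
qed

lemma bs_plays_deterministic:
  assumes "bs_plays R1 ms1 ts R1'" "bs_plays R2 ms2 ts R2'"
    and "disjoint_cycles (label_cycles R1)" "disjoint_cycles (label_cycles R2)"
    and "state_perm R1 = state_perm R2" "set (concat R1) = set (concat R2)"
  shows "ms1 = ms2"
  using assms
proof (induction arbitrary: R2 ms2 rule: bs_plays.induct)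
  case (1 R)
  then show ?case by (cases rule: bs_plays.cases) auto
next
  case (2 R1 m1 t R1a ms1 ts R1')
  from 2(4) obtain m2 R2a ms2' where step2: "bs_step R2 m2 t R2a" and plays2: "bs_plays R2a ms2' ts R2'"
    and ms2: "ms2 = m2 # ms2'"
    by (cases rule: bs_plays.cases) auto
  have "m1 = m2" and arms: "set (concat R1a) = set (concat R2a)"
    using bs_step_deterministic[OF 2(1) step2 2(5-8)] by auto
  moreover have "ms1 = ms2'"
    using 2(3)[OF plays2 bs_step_invariants(1)[OF 2(1) 2(5)] bs_step_invariants(1)[OF step2 2(6)] _ arms]
      bs_step_invariants(4)[OF 2(1) 2(5)] bs_step_invariants(4)[OF step2 2(6)] 2(7)
    by simp
  ultimately show ?case using ms2 by simp
qed

lemma bs_step_exists: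
  assumes "r \<in> set R" "x \<in> set r" "y \<in> set r" "x \<noteq> y"
  shows "\<exists>m R'. bs_step R m (transpose (snd x) (snd y)) R'"
proof -
  obtain P Q where R: "R = P @ r # Q" using assms(1) by (meson split_list)
  obtain k xs ys where "rotate k r = xs @ y # ys @ [x]" using ex_rotate_eq_append_two assms(2-4) by metis
  moreover obtain al i S1 where "xs @ [y] = (al, i) # S1" by (cases "xs @ [y]") auto
  moreover obtain bl j S2 where "ys @ [x] = (bl, j) # S2" by (cases "ys @ [x]") auto
  ultimately have "rotate k r = (al, i) # S1 @ (bl, j) # S2"
    and "last ((al, i) # S1) = y" "last ((bl, j) # S2) = x"
    by (metis append.assoc append_Cons append_Nil last_snoc)+
  then have "bs_step R {al, bl} (transpose (snd x) (snd y))
      (P @ (S1 @ [(Nw al bl, i)]) # (S2 @ [(Nw bl al, j)]) # Q)"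
    using bs_step.intros[of k r al i S1 bl j S2 P Q] unfolding R by simp
  then show ?thesis by blast
qed

lemma bs_terminal_iff_card:
  assumes "disjoint_cycles (label_cycles R)"
  shows "bs_terminal R \<longleftrightarrow> card (set (concat (label_cycles R))) = length R"
proof -
  have "[] \<notin> set R" using assms unfolding disjoint_cycles_def label_cycles_def by auto
  then have "bs_terminal R \<longleftrightarrow> (\<forall>c \<in> set (label_cycles R). length c = 1)"
    unfolding bs_terminal_def label_cycles_def by (auto simp: le_Suc_eq)
  then show ?thesis using card_concat_eq_length_iff[OF assms] by simp
qed

lemma state_perm_terminal:
  assumes "disjoint_cycles (label_cycles R)" "bs_terminal R"
  shows "state_perm R = id"
proof -
  have "\<forall>c \<in> set (label_cycles R). length c = 1"
    using assms(2) bs_terminal_iff_card[OF assms(1)] card_concat_eq_length_iff[OF assms(1)] by simp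
  then show ?thesis unfolding state_perm_def by (intro cycles_perm_singletons) auto
qed

lemma bs_plays_exists:
  assumes "disjoint_cycles (label_cycles R)" "state_perm R = perm_prod ts"
    and "card (set (concat (label_cycles R))) = length R + length ts"
    and "\<forall>t \<in> set ts. \<exists>p \<in> set (concat (label_cycles R)). \<exists>q \<in> set (concat (label_cycles R)).
           p \<noteq> q \<and> t = transpose p q"
  shows "\<exists>ms R'. bs_plays R ms ts R' \<and> bs_terminal R'"
  using assms
proof (induction ts arbitrary: R)
  case Nil
  then show ?case using bs_terminal_iff_card bs_plays.intros(1) by fastforce
next
  case (Cons t ts)
  let ?C = "label_cycles R"
  obtain a b where ab: "a \<in> set (concat ?C)" "b \<in> set (concat ?C)" "a \<noteq> b" "t = transpose a b"
    using Cons.prems(4) by auto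
  have "\<exists>c \<in> set ?C. a \<in> set c \<and> b \<in> set c"
  proof (rule minimal_factorization_first_transpose_within_cycle)
    show "cycles_perm ?C = perm_prod (transpose a b # ts)"
      using Cons.prems(2) ab(4) unfolding state_perm_def by simp
    show "\<forall>t \<in> set ts. \<exists>p \<in> set (concat ?C). \<exists>q \<in> set (concat ?C). t = transpose p q"
      using Cons.prems(4) by (simp del: set_concat) blast
  qed (use Cons.prems(1,3) ab in simp_all)
  then obtain r x y where "r \<in> set R" "x \<in> set r" "y \<in> set r" "snd x = a" "snd y = b"
    unfolding label_cycles_def by auto
  moreover from this have "x \<noteq> y" using ab(3) by auto
  ultimately obtain m R1 where step: "bs_step R m t R1" using bs_step_exists ab(4) by blast
  note inv = bs_step_invariants[OF step Cons.prems(1)]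
  have "\<forall>t \<in> set ts. \<exists>p \<in> set (concat (label_cycles R1)). \<exists>q \<in> set (concat (label_cycles R1)).
      p \<noteq> q \<and> t = transpose p q"
    using Cons.prems(4) unfolding inv(2) by (simp del: set_concat)
  moreover have "state_perm R1 = perm_prod ts"
    using inv(4) Cons.prems(2) ab(4) by (metis perm_prod_Cons comp_transpose_eq_iff)
  moreover have "card (set (concat (label_cycles R1))) = length R1 + length ts"
    using Cons.prems(3) unfolding inv(2,3) by simp
  ultimately have "\<exists>ms R'. bs_plays R1 ms ts R' \<and> bs_terminal R'"
    using Cons.IH[OF inv(1)] by blast
  then show ?case using bs_plays.intros(2)[OF step] by blast
qed

lemma cycle_of_list_upt:
  "a \<le> b \<Longrightarrow> cycle_of_list [a..<Suc b] = (\<lambda>x. if a \<le> x \<and> x < b then Suc x else if x = b then a else x)"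
proof (induction a rule: inc_induct)
  case (step a)
  then have "[a..<Suc b] = a # Suc a # [Suc (Suc a)..<Suc b]"
    and "[Suc a..<Suc b] = Suc a # [Suc (Suc a)..<Suc b]"
    by (simp_all add: upt_conv_Cons)
  then have "cycle_of_list [a..<Suc b] = transpose a (Suc a) \<circ> cycle_of_list [Suc a..<Suc b]" by simp
  then show ?case using step by (auto simp: fun_eq_iff transpose_def simp del: upt_Suc)
qed (simp add: fun_eq_iff)

lemma label_cycles_bs_init: "label_cycles (bs_init n) = [[1..<Suc n]]"
  by (simp add: label_cycles_def bs_init_def comp_def)

lemma bs_init_invariants:
  assumes "1 \<le> n"
  shows "disjoint_cycles (label_cycles (bs_init n))"
    and "set (concat (label_cycles (bs_init n))) = {1..n}"
    and "length (bs_init n) = 1"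
    and "state_perm (bs_init n) = ncycle n"
proof -
  have "[1..<Suc n] \<noteq> []" using assms by simp
  then show "disjoint_cycles (label_cycles (bs_init n))"
    unfolding label_cycles_bs_init disjoint_cycles_def by simp
  show "set (concat (label_cycles (bs_init n))) = {1..n}"
    unfolding label_cycles_bs_init by auto
  show "length (bs_init n) = 1" by (simp add: bs_init_def)
  show "state_perm (bs_init n) = ncycle n"
    using assms unfolding state_perm_def label_cycles_bs_init
    by (simp add: cycle_of_list_upt ncycle_def fun_eq_iff del: upt_Suc)
qed

lemma line_of_play_factorization:
  assumes "1 \<le> n" "line_of_play n ms ts"
  shows "length ts = n - 1 \<and> perm_prod ts = ncycle n"
proof -
  obtain R where R: "bs_plays (bs_init n) ms ts R" "bs_terminal R"
    using assms(2) unfolding line_of_play_def by blast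
  note init = bs_init_invariants[OF assms(1)]
  show ?thesis
    using bs_plays_invariants[OF R(1) init(1)] bs_terminal_iff_card[of R] state_perm_terminal[of R]
      R(2) init
    by auto
qed

lemma line_of_play_moves_unique:
  assumes "1 \<le> n" "line_of_play n ms1 ts" "line_of_play n ms2 ts"
  shows "ms1 = ms2"
proof -
  obtain R1 R2 where "bs_plays (bs_init n) ms1 ts R1" "bs_plays (bs_init n) ms2 ts R2"
    using assms(2,3) unfolding line_of_play_def by blast
  with bs_init_invariants(1)[OF assms(1)] show ?thesis
    using bs_plays_deterministic by blast
qed

lemma line_of_play_exists:
  assumes "1 \<le> n" "length ts = n - 1" "\<forall>t \<in> set ts. is_transp_Sn n t" "perm_prod ts = ncycle n"
  shows "\<exists>ms. line_of_play n ms ts"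
proof -
  have "\<forall>t \<in> set ts. \<exists>p \<in> {1..n}. \<exists>q \<in> {1..n}. p \<noteq> q \<and> t = transpose p q"
    using assms(3) unfolding is_transp_Sn_def by blast
  then have "\<exists>ms R. bs_plays (bs_init n) ms ts R \<and> bs_terminal R"
    by (intro bs_plays_exists) (use bs_init_invariants[OF assms(1)] assms in simp_all)
  then show ?thesis unfolding line_of_play_def .
qed

theorem theorem5:
  fixes n :: nat
  assumes "n \<ge> 2"
  shows "(\<forall>ms ts. line_of_play n ms ts \<longrightarrow>
            length ts = n - 1 \<and> perm_prod ts = ncycle n)
       \<and> (\<forall>ms1 ms2 ts1 ts2. line_of_play n ms1 ts1 \<and> line_of_play n ms2 ts2 \<and> ms1 \<noteq> ms2
            \<longrightarrow> ts1 \<noteq> ts2)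
       \<and> (\<forall>ts. length ts = n - 1 \<and> (\<forall>t \<in> set ts. is_transp_Sn n t) \<and> perm_prod ts = ncycle n
            \<longrightarrow> (\<exists>ms. line_of_play n ms ts))"
proof -
  have "1 \<le> n" using assms by simp
  then show ?thesis
    using line_of_play_factorization line_of_play_moves_unique line_of_play_exists by blast
qed

end
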